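(* Let $d,n\ge 1$, let $\kappa\ge1$ divide $d$, and set $d'=d/\kappa$. Let $A_1,\dots,A_{d'}\in\mathbb{R}^{m\times n^\kappa}$ and $\mathcal{A}(\mathcal{Y})=\mathcal{Y}\times_1A_1\times_2\cdots\times_{d'}A_{d'}$. Suppose each $A_i$ has the RIP$(\varepsilon,\mathcal{S}_{1,2})$ property. Let $\delta=\max\{(1+\varepsilon)^d-1,\,1-(1-\varepsilon)^d\}$ and assume $\delta<1$. Then for all $\mathcal{X}\in\mathbb{R}^{n\times\cdots\times n}$ ($d$ modes) with HOSVD rank $(1,\dots,1)$, $$(1-\delta)\|\mathcal{X}\|^2\le\|\mathcal{A}(\mathcal{R}(\mathcal{X}))\|^2\le(1+\delta)\|\mathcal{X}\|^2.$$
   Context: $\|\cdot\|$ is the Frobenius norm. The $j$-mode product of $\mathcal{X}\in\mathbb{R}^{p_1\times\cdots\times p_D}$ with $U\in\mathbb{R}^{q\times p_j}$ has entries $(\mathcal{X}\times_jU)_{i_1,\dots,\ell,\dots,i_D}=\sum_{i_j}\mathcal{X}_{i_1,\dots,i_j,\dots,i_D}U_{\ell,i_j}$. HOSVD rank $(1,\dots,1)$ means $\mathcal{X}=c\,\mathbf{u}^1\circ\cdots\circ\mathbf{u}^d$ (nonzero rank-one). The reshaping operator $\mathcal{R}$ is the linear map with $\mathcal{R}(\mathbf{x}^1\circ\cdots\circ\mathbf{x}^d)=\bigcirc_{i=1}^{d'}(\mathbf{x}^{\kappa(i-1)+1}\otimes\cdots\otimes\mathbf{x}^{\kappa i})$ ($\circ$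 outer product, $\otimes$ Kronecker product). $\mathcal{S}_1=\{\mathbf{u}^1\otimes\cdots\otimes\mathbf{u}^\kappa:\mathbf{u}^i\in\mathbb{S}^{n-1}\}$, $\mathcal{S}_2=\{(\mathbf{x}+\mathbf{y})/\|\mathbf{x}+\mathbf{y}\|_2:\mathbf{x},\mathbf{y}\in\mathcal{S}_1,\langle\mathbf{x},\mathbf{y}\rangle=0\}$, $\mathcal{S}_{1,2}=\mathcal{S}_1\cup\mathcal{S}_2$. A linear map $L$ has RIP$(\varepsilon,\mathcal{S})$ if $(1-\varepsilon)\|s\|^2\le\|Ls\|^2\le(1+\varepsilon)\|s\|^2$ for all $s\in\mathcal{S}$. *)

theory Defs
  imports Complex_Main
begin

text \<open>Tensors of order D with mode sizes dims = [p_1,...,p_D] are represented as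
  functions from index lists (0-based) to reals; only the values on tidx dims matter.\<close>

definition tidx :: "nat list \<Rightarrow> nat list set" where
  "tidx dims = {is. length is = length dims \<and> (\<forall>j<length dims. is ! j < dims ! j)}"

definition fnorm2 :: "nat list \<Rightarrow> (nat list \<Rightarrow> real) \<Rightarrow> real" where
  "fnorm2 dims X = (\<Sum>is\<in>tidx dims. (X is)^2)"

definition mode_prod :: "nat \<Rightarrow> nat \<Rightarrow> (nat list \<Rightarrow> real) \<Rightarrow> (nat \<Rightarrow> nat \<Rightarrow> real)
    \<Rightarrow> (nat list \<Rightarrow> real)" where
  "mode_prod j p X U = (\<lambda>is. \<Sum>i<p. X (is[j := i]) * U (is ! j) i)"

definition outer :: "(nat \<Rightarrow> real) list \<Rightarrow> (nat list \<Rightarrow> real)" where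
  "outer us = (\<lambda>is. \<Prod>j<length us. (us ! j) (is ! j))"

text \<open>HOSVD rank (1,...,1): nonzero rank-one tensor.\<close>
definition hosvd_rank_one :: "nat list \<Rightarrow> (nat list \<Rightarrow> real) \<Rightarrow> bool" where
  "hosvd_rank_one dims X \<longleftrightarrow>
     (\<exists>c us. length us = length dims \<and> (\<forall>is\<in>tidx dims. X is = c * outer us is))
     \<and> (\<exists>is\<in>tidx dims. X is \<noteq> 0)"

text \<open>Kronecker product of vectors of length n (standard ordering,
  (x \<otimes> y)_(i*n+j) = x_i y_j, 0-based).\<close>
fun kron :: "nat \<Rightarrow> (nat \<Rightarrow> real) list \<Rightarrow> nat \<Rightarrow> real" where
  "kron n [] = (\<lambda>k. 1)"
| "kron n (u # us) = (\<lambda>k. u (k div n ^ length us) * kron n us (k mod n ^ length us))"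

text \<open>Vectors in R^N: functions nat => real, only indices < N matter.\<close>
definition vnorm2 :: "nat \<Rightarrow> (nat \<Rightarrow> real) \<Rightarrow> real" where
  "vnorm2 N x = (\<Sum>k<N. (x k)^2)"

definition vinner :: "nat \<Rightarrow> (nat \<Rightarrow> real) \<Rightarrow> (nat \<Rightarrow> real) \<Rightarrow> real" where
  "vinner N x y = (\<Sum>k<N. x k * y k)"

definition matvec :: "nat \<Rightarrow> (nat \<Rightarrow> nat \<Rightarrow> real) \<Rightarrow> (nat \<Rightarrow> real) \<Rightarrow> (nat \<Rightarrow> real)" where
  "matvec N A x = (\<lambda>l. \<Sum>k<N. A l k * x k)"

definition S1 :: "nat \<Rightarrow> nat \<Rightarrow> (nat \<Rightarrow> real) set" where
  "S1 n \<kappa> = {kron n us | us. length us = \<kappa> \<and> (\<forall>u\<in>set us. vnorm2 n u = 1)}"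

definition S2 :: "nat \<Rightarrow> nat \<Rightarrow> (nat \<Rightarrow> real) set" where
  "S2 n \<kappa> = {(\<lambda>k. (x k + y k) / sqrt (vnorm2 (n ^ \<kappa>) (\<lambda>k. x k + y k))) | x y.
      x \<in> S1 n \<kappa> \<and> y \<in> S1 n \<kappa> \<and> vinner (n ^ \<kappa>) x y = 0}"

definition S12 :: "nat \<Rightarrow> nat \<Rightarrow> (nat \<Rightarrow> real) set" where
  "S12 n \<kappa> = S1 n \<kappa> \<union> S2 n \<kappa>"

definition RIP :: "nat \<Rightarrow> nat \<Rightarrow> (nat \<Rightarrow> nat \<Rightarrow> real) \<Rightarrow> real \<Rightarrow> (nat \<Rightarrow> real) set \<Rightarrow> bool" where
  "RIP m N A \<epsilon> S \<longleftrightarrow> (\<forall>s\<in>S. (1 - \<epsilon>) * vnorm2 N s \<le> vnorm2 m (matvec N A s)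
                                \<and> vnorm2 m (matvec N A s) \<le> (1 + \<epsilon>) * vnorm2 N s)"

text \<open>Reshaping operator: order-d tensor (n x ... x n) to order d/kappa tensor
  (n^kappa x ... x n^kappa); index k_l of the result encodes the kappa indices
  of group l as base-n digits (most significant first), matching kron.\<close>
definition digits :: "nat \<Rightarrow> nat \<Rightarrow> nat \<Rightarrow> nat list" where
  "digits n \<kappa> k = map (\<lambda>t. (k div n ^ (\<kappa> - 1 - t)) mod n) [0..<\<kappa>]"

definition reshape :: "nat \<Rightarrow> nat \<Rightarrow> (nat list \<Rightarrow> real) \<Rightarrow> (nat list \<Rightarrow> real)" where
  "reshape n \<kappa> X = (\<lambda>ks. X (concat (map (digits n \<kappa>) ks)))"

text \<open>Multilinear operator Y x_1 A_1 x_2 ... x_{d'} A_{d'} (A indexed 0..d'-1),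
  each mode of Y of size N.\<close>
definition multi_op :: "nat \<Rightarrow> nat \<Rightarrow> (nat \<Rightarrow> nat \<Rightarrow> nat \<Rightarrow> real) \<Rightarrow> (nat list \<Rightarrow> real)
    \<Rightarrow> (nat list \<Rightarrow> real)" where
  "multi_op d' N A Y = foldl (\<lambda>Z j. mode_prod j N Z (A j)) Y [0..<d']"

end

theory Submission
  imports Defs
begin

(* Normalise the rank-one tensor to c times an outer product of d unit vectors. Reshaping
   groups consecutive blocks of kappa factors into Kronecker products, which are again unit
   vectors and lie in S1, so the reshaped tensor is c times an outer product of d' unit
   vectors y_i of S1. Mode products act factorwise on such a tensor, hence
   ||A(R(X))||^2 = c^2 * prod_i ||A_i y_i||^2 while ||X||^2 = c^2, and the RIP puts every
   factor in [1 - eps, 1 + eps]. Since d' <= d, the bounds (1 - eps)^d' and (1 + eps)^d'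
   are within delta of 1. *)

lemma outer_Nil [simp]: "outer [] ks = 1"
  by (simp add: outer_def)

lemma outer_Cons [simp]: "outer (u # us) (k # ks) = u k * outer us ks"
  by (simp add: outer_def prod.lessThan_Suc_shift del: prod.lessThan_Suc)

lemma outer_append:
  "length ks = length us \<Longrightarrow> outer (us @ vs) (ks @ js) = outer us ks * outer vs js"
  by (induction ks us rule: list_induct2) simp_all

lemma length_digits [simp]: "length (digits n \<kappa> k) = \<kappa>"
  by (simp add: digits_def)

lemma digits_Suc: "digits n (Suc L) k = (k div n ^ L) mod n # digits n L k"
  unfolding digits_def
  by (rule nth_equalityI) (auto simp del: upt_Suc simp: nth_Cons split: nat.split)

lemma digits_mod_power:
  assumes "0 < n"
  shows "digits n L (k mod n ^ L) = digits n L k"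
proof (rule nth_equalityI)
  fix t assume "t < length (digits n L (k mod n ^ L))"
  then have "L = (L - 1 - t) + Suc t" by simp
  then have "n ^ L = n ^ (L - 1 - t) * n ^ Suc t" by (metis power_add)
  then have "k mod n ^ L div n ^ (L - 1 - t) = k div n ^ (L - 1 - t) mod n ^ Suc t"
    using assms by (simp add: mod_mult2_eq)
  then show "digits n L (k mod n ^ L) ! t = digits n L k ! t"
    using \<open>t < _\<close> by (simp add: digits_def mod_mod_cancel)
qed simp

lemma kron_eq_outer_digits:
  "k < n ^ length us \<Longrightarrow> kron n us k = outer us (digits n (length us) k)"
proof (induction us arbitrary: k)
  case Nil
  then show ?case by (simp add: digits_def)
next
  case (Cons u us)
  then have "0 < n" by (cases n) simp_all
  moreover have "k div n ^ length us < n"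
    using Cons.prems by (simp add: less_mult_imp_div_less mult.commute)
  ultimately show ?case using Cons.IH by (simp add: digits_Suc digits_mod_power)
qed

lemma outer_concat_digits:
  "length ks = length gs \<Longrightarrow> \<forall>g\<in>set gs. length g = \<kappa> \<Longrightarrow>
   outer (concat gs) (concat (map (digits n \<kappa>) ks))
     = (\<Prod>i<length gs. outer (gs ! i) (digits n \<kappa> (ks ! i)))"
  by (induction ks gs rule: list_induct2)
     (simp_all add: outer_append prod.lessThan_Suc_shift del: prod.lessThan_Suc)

lemma sum_lessThan_mult:
  fixes f :: "nat \<Rightarrow> 'a::comm_monoid_add"
  shows "(\<Sum>k<a * M. f k) = (\<Sum>x<a. \<Sum>y<M. f (x * M + y))"
  using sum.nat_group[of f M a]
  by (simp add: sum.shift_bounds_nat_ivl[of f 0 _ M, simplified] atLeast0LessThan add.commute)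

lemma vnorm2_kron: "vnorm2 (n ^ length us) (kron n us) = (\<Prod>u\<leftarrow>us. vnorm2 n u)"
proof (induction us)
  case Nil
  then show ?case by (simp add: vnorm2_def)
next
  case (Cons u us)
  let ?M = "n ^ length us"
  show ?case
  proof (cases "?M = 0")
    case True
    then show ?thesis by (simp add: vnorm2_def)
  next
    case False
    have "vnorm2 (n ^ length (u # us)) (kron n (u # us))
        = (\<Sum>x<n. \<Sum>y<?M. (u x)^2 * (kron n us y)^2)"
      using False by (simp add: vnorm2_def sum_lessThan_mult power_mult_distrib)
    also have "\<dots> = vnorm2 n u * vnorm2 ?M (kron n us)"
      by (simp add: vnorm2_def sum_product)
    finally show ?thesis using Cons.IH by simp
  qed
qed

lemma vnorm2_kron_units: "\<forall>u\<in>set us. vnorm2 n u = 1 \<Longrightarrow> vnorm2 (n ^ length us) (kron n us) = 1"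
  using map_cong[OF refl, of us "vnorm2 n" "\<lambda>_. 1"] by (simp add: vnorm2_kron map_replicate_const)

lemma tidx_Nil [simp]: "tidx [] = {[]}"
  by (auto simp: tidx_def)

lemma tidx_Cons: "tidx (p # dims) = (\<lambda>(k, ks). k # ks) ` ({..<p} \<times> tidx dims)"
proof (intro set_eqI iffI)
  fix js assume js: "js \<in> tidx (p # dims)"
  then obtain k ks where "js = k # ks" unfolding tidx_def by (cases js) auto
  with js have "k < p" and "ks \<in> tidx dims"
    unfolding tidx_def by (force, fastforce)
  with \<open>js = k # ks\<close> show "js \<in> (\<lambda>(k, ks). k # ks) ` ({..<p} \<times> tidx dims)" by auto
qed (auto simp: tidx_def nth_Cons split: nat.split)

lemma tidx_replicate [simp]:
  "ks \<in> tidx (replicate D p) \<longleftrightarrow> length ks = D \<and> (\<forall>k\<in>set ks. k < p)"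
  by (auto simp: tidx_def all_set_conv_all_nth)

lemma sum_tidx_prod:
  fixes g :: "nat \<Rightarrow> nat \<Rightarrow> 'a::comm_semiring_1"
  shows "(\<Sum>ks\<in>tidx dims. \<Prod>i<length dims. g i (ks ! i)) = (\<Prod>i<length dims. \<Sum>k<dims ! i. g i k)"
proof (induction dims arbitrary: g)
  case Nil
  then show ?case by simp
next
  case (Cons p dims)
  have "inj_on (\<lambda>(k, ks). k # ks) ({..<p} \<times> tidx dims)"
    by (auto simp: inj_on_def)
  then have "(\<Sum>ks\<in>tidx (p # dims). \<Prod>i<length (p # dims). g i (ks ! i))
      = (\<Sum>(k, ks)\<in>{..<p} \<times> tidx dims. g 0 k * (\<Prod>i<length dims. g (Suc i) (ks ! i)))"
    unfolding tidx_Cons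
    by (simp add: sum.reindex split_def prod.lessThan_Suc_shift del: prod.lessThan_Suc)
  also have "\<dots> = (\<Sum>k<p. g 0 k) * (\<Sum>ks\<in>tidx dims. \<Prod>i<length dims. g (Suc i) (ks ! i))"
    by (simp add: sum.cartesian_product[symmetric] sum_product)
  finally show ?case
    by (simp add: Cons.IH[of "\<lambda>i. g (Suc i)"] prod.lessThan_Suc_shift del: prod.lessThan_Suc)
qed

lemma fnorm2_separable:
  assumes "\<forall>ks\<in>tidx dims. X ks = c * (\<Prod>i<length dims. f i (ks ! i))"
  shows "fnorm2 dims X = c\<^sup>2 * (\<Prod>i<length dims. vnorm2 (dims ! i) (f i))"
proof -
  have "fnorm2 dims X = (\<Sum>ks\<in>tidx dims. c\<^sup>2 * (\<Prod>i<length dims. (f i (ks ! i))\<^sup>2))"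
    unfolding fnorm2_def using assms by (simp add: power_mult_distrib prod_power_distrib)
  then show ?thesis
    by (simp add: sum_tidx_prod[of "\<lambda>i k. (f i k)\<^sup>2"] vnorm2_def flip: sum_distrib_left)
qed

lemma mode_prod_separable:
  assumes "k < length js"
    and "\<And>l. l < N \<Longrightarrow> Z (js[k := l]) = c * (\<Prod>i<length js. f i (js[k := l] ! i))"
  shows "mode_prod k N Z U js = c * (\<Prod>i<length js. (f(k := matvec N U (f k))) i (js ! i))"
proof -
  define P where "P = (\<Prod>i\<in>{..<length js} - {k}. f i (js ! i))"
  have "Z (js[k := l]) = c * f k l * P" if "l < N" for l
    using assms that by (simp add: prod.remove[of _ k] P_def nth_list_update)
  then have "mode_prod k N Z U js = c * P * matvec N U (f k) (js ! k)"
    by (simp add: mode_prod_def matvec_def sum_distrib_left mult_ac)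
  also have "\<dots> = c * (\<Prod>i<length js. (f(k := matvec N U (f k))) i (js ! i))"
    using assms(1) by (simp add: prod.remove[of _ k] P_def)
  finally show ?thesis .
qed

lemma foldl_mode_prod_separable:
  assumes "\<forall>ks\<in>tidx (replicate D N). Y ks = c * (\<Prod>i<D. y i (ks ! i))"
    and "k \<le> D" and "length js = D" and "\<forall>i. k \<le> i \<and> i < D \<longrightarrow> js ! i < N"
  shows "foldl (\<lambda>Z j. mode_prod j N Z (A j)) Y [0..<k] js
           = c * (\<Prod>i<D. (if i < k then matvec N (A i) (y i) else y i) (js ! i))"
  using assms(2-)
proof (induction k arbitrary: js)
  case 0
  then have "js \<in> tidx (replicate D N)" by (simp add: tidx_def)
  then show ?case using assms(1) by simp
next
  case (Suc k)
  let ?f = "\<lambda>i. if i < k then matvec N (A i) (y i) else y i"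
  have "mode_prod k N (foldl (\<lambda>Z j. mode_prod j N Z (A j)) Y [0..<k]) (A k) js
      = c * (\<Prod>i<D. (?f(k := matvec N (A k) (?f k))) i (js ! i))"
  proof (subst Suc.prems(2)[symmetric], rule mode_prod_separable)
    show "k < length js" using Suc.prems by simp
    fix l assume "l < N"
    then show "foldl (\<lambda>Z j. mode_prod j N Z (A j)) Y [0..<k] (js[k := l])
        = c * (\<Prod>i<length js. ?f i (js[k := l] ! i))"
      using Suc.prems by (subst Suc.IH) (auto simp: nth_list_update)
  qed
  also have "?f(k := matvec N (A k) (?f k)) = (\<lambda>i. if i < Suc k then matvec N (A i) (y i) else y i)"
    by auto
  finally show ?case by simp
qed

lemma multi_op_separable:
  assumes "\<forall>ks\<in>tidx (replicate D N). Y ks = c * (\<Prod>i<D. y i (ks ! i))" and "length js = D"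
  shows "multi_op D N A Y js = c * (\<Prod>i<D. matvec N (A i) (y i) (js ! i))"
  using foldl_mode_prod_separable[OF assms(1) order.refl assms(2)] by (simp add: multi_op_def)

lemma hosvd_rank_one_unit_factors:
  assumes "hosvd_rank_one dims X"
  obtains c vs where "length vs = length dims" and "\<forall>i<length dims. vnorm2 (dims ! i) (vs ! i) = 1"
    and "\<forall>ks\<in>tidx dims. X ks = c * outer vs ks"
proof -
  obtain c us where us: "length us = length dims" "\<forall>ks\<in>tidx dims. X ks = c * outer us ks"
    and "\<exists>ks\<in>tidx dims. X ks \<noteq> 0"
    using assms unfolding hosvd_rank_one_def by blast
  then obtain ks0 where ks0: "ks0 \<in> tidx dims" "outer us ks0 \<noteq> 0" by auto
  define r where "r i = sqrt (vnorm2 (dims ! i) (us ! i))" for i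
  have r_pos: "r i > 0" if "i < length dims" for i
  proof -
    have "(us ! i) (ks0 ! i) \<noteq> 0" and "ks0 ! i < dims ! i"
      using ks0 us(1) that by (auto simp: outer_def tidx_def)
    then have "vnorm2 (dims ! i) (us ! i) > 0"
      unfolding vnorm2_def by (intro sum_pos2[of _ "ks0 ! i"]) auto
    then show ?thesis by (simp add: r_def)
  qed
  define vs where "vs = map (\<lambda>i k. (us ! i) k / r i) [0..<length dims]"
  have length_vs: "length vs = length dims" by (simp add: vs_def)
  have "vnorm2 (dims ! i) (vs ! i) = 1" if "i < length dims" for i
    using r_pos[OF that] that
    by (simp add: vs_def vnorm2_def r_def power_divide sum_nonneg flip: sum_divide_distrib)
  moreover have "X ks = (c * (\<Prod>i<length dims. r i)) * outer vs ks" if "ks \<in> tidx dims" for ks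
  proof -
    have "outer us ks = (\<Prod>i<length dims. r i * (vs ! i) (ks ! i))"
      unfolding outer_def us(1) by (rule prod.cong) (auto simp: vs_def dest: r_pos)
    then show ?thesis using us that by (simp add: outer_def[of vs] length_vs prod.distrib)
  qed
  ultimately show ?thesis using length_vs by (intro that[of vs]) auto
qed

lemma concat_equal_chunks:
  "length xs = \<kappa> * D \<Longrightarrow> \<exists>gs. length gs = D \<and> (\<forall>g\<in>set gs. length g = \<kappa>) \<and> concat gs = xs"
proof (induction D arbitrary: xs)
  case (Suc D)
  then obtain gs where "length gs = D" "\<forall>g\<in>set gs. length g = \<kappa>" "concat gs = drop \<kappa> xs"
    by (metis diff_add_inverse length_drop mult_Suc_right)
  with Suc.prems show ?case by (intro exI[of _ "take \<kappa> xs # gs"]) auto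
qed simp

lemma length_concat_digits: "length (concat (map (digits n \<kappa>) ks)) = \<kappa> * length ks"
  by (induction ks) simp_all

lemma reshape_outer_concat:
  assumes "0 < n" and "\<forall>g\<in>set gs. length g = \<kappa>"
    and "\<forall>js\<in>tidx (replicate (\<kappa> * length gs) n). X js = c * outer (concat gs) js"
    and "ks \<in> tidx (replicate (length gs) (n ^ \<kappa>))"
  shows "reshape n \<kappa> X ks = c * (\<Prod>i<length gs. kron n (gs ! i) (ks ! i))"
proof -
  have "concat (map (digits n \<kappa>) ks) \<in> tidx (replicate (\<kappa> * length gs) n)"
    using assms(1,4) by (auto simp: length_concat_digits digits_def)
  then have "reshape n \<kappa> X ks = c * (\<Prod>i<length gs. outer (gs ! i) (digits n \<kappa> (ks ! i)))"
    using assms(2-4) by (simp add: reshape_def outer_concat_digits tidx_def)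
  also have "\<dots> = c * (\<Prod>i<length gs. kron n (gs ! i) (ks ! i))"
    using assms(2,4) by (simp add: kron_eq_outer_digits tidx_def)
  finally show ?thesis .
qed

lemma prod_bounds_by_delta:
  fixes a :: "nat \<Rightarrow> real" and \<epsilon> \<delta> :: real
  assumes a: "\<forall>i<D. 1 - \<epsilon> \<le> a i \<and> a i \<le> 1 + \<epsilon>" and "0 < D" and "D \<le> d"
    and \<delta>: "\<delta> = max ((1 + \<epsilon>) ^ d - 1) (1 - (1 - \<epsilon>) ^ d)" and "\<delta> < 1"
  shows "1 - \<delta> \<le> (\<Prod>i<D. a i) \<and> (\<Prod>i<D. a i) \<le> 1 + \<delta>"
proof
  have "0 \<le> \<epsilon>" using a \<open>0 < D\<close> by force
  have "\<epsilon> < 1"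
  proof (rule ccontr)
    assume "\<not> \<epsilon> < 1"
    then have "(1 + \<epsilon>) ^ 1 \<le> (1 + \<epsilon>) ^ d"
      using \<open>0 < D\<close> \<open>D \<le> d\<close> by (intro power_increasing) auto
    then show False using \<delta> \<open>\<delta> < 1\<close> \<open>\<not> \<epsilon> < 1\<close> by simp
  qed
  have "1 - \<delta> \<le> (1 - \<epsilon>) ^ d" using \<delta> by simp
  also have "\<dots> \<le> (1 - \<epsilon>) ^ D"
    using \<open>D \<le> d\<close> \<open>0 \<le> \<epsilon>\<close> \<open>\<epsilon> < 1\<close> by (intro power_decreasing) auto
  also have "\<dots> = (\<Prod>i<D. 1 - \<epsilon>)" by simp
  also have "\<dots> \<le> (\<Prod>i<D. a i)" using a \<open>\<epsilon> < 1\<close> by (intro prod_mono) auto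
  finally show "1 - \<delta> \<le> (\<Prod>i<D. a i)" .
  have "(\<Prod>i<D. a i) \<le> (\<Prod>i<D. 1 + \<epsilon>)" using a \<open>\<epsilon> < 1\<close> by (intro prod_mono) auto
  also have "\<dots> = (1 + \<epsilon>) ^ D" by simp
  also have "\<dots> \<le> (1 + \<epsilon>) ^ d" using \<open>D \<le> d\<close> \<open>0 \<le> \<epsilon>\<close> by (intro power_increasing) auto
  also have "\<dots> \<le> 1 + \<delta>" using \<delta> by simp
  finally show "(\<Prod>i<D. a i) \<le> 1 + \<delta>" .
qed

theorem proposition1:
  fixes d n \<kappa> d' m :: nat and \<epsilon> \<delta> :: real
    and A :: "nat \<Rightarrow> nat \<Rightarrow> nat \<Rightarrow> real"
    and X :: "nat list \<Rightarrow> real"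
  assumes "d \<ge> 1" and "n \<ge> 1" and "\<kappa> \<ge> 1" and "\<kappa> dvd d" and "d' = d div \<kappa>"
    and "\<forall>i<d'. RIP m (n ^ \<kappa>) (A i) \<epsilon> (S12 n \<kappa>)"
    and "\<delta> = max ((1 + \<epsilon>) ^ d - 1) (1 - (1 - \<epsilon>) ^ d)"
    and "\<delta> < 1"
    and "hosvd_rank_one (replicate d n) X"
  shows "(1 - \<delta>) * fnorm2 (replicate d n) X
           \<le> fnorm2 (replicate d' m) (multi_op d' (n ^ \<kappa>) A (reshape n \<kappa> X))
         \<and> fnorm2 (replicate d' m) (multi_op d' (n ^ \<kappa>) A (reshape n \<kappa> X))
           \<le> (1 + \<delta>) * fnorm2 (replicate d n) X"
proof -
  have d: "d = \<kappa> * d'" using assms(4,5) by simp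
  then have "0 < d'" "d' \<le> d" using assms(1,3) by auto
  obtain c vs where "length vs = length (replicate d n)"
    and "\<forall>i<length (replicate d n). vnorm2 (replicate d n ! i) (vs ! i) = 1"
    and X: "\<forall>js\<in>tidx (replicate d n). X js = c * outer vs js"
    by (rule hosvd_rank_one_unit_factors[OF assms(9)])
  then have vs: "length vs = d" "\<forall>v\<in>set vs. vnorm2 n v = 1"
    by (simp_all add: all_set_conv_all_nth)
  obtain gs where gs: "length gs = d'" "\<forall>g\<in>set gs. length g = \<kappa>" "concat gs = vs"
    using concat_equal_chunks[of vs \<kappa> d'] vs(1) d by blast
  define y where "y i = kron n (gs ! i)" for i
  have y: "y i \<in> S12 n \<kappa>" "vnorm2 (n ^ \<kappa>) (y i) = 1" if "i < d'" for i
    using nth_mem[OF that[folded gs(1)]] vs(2) gs vnorm2_kron_units[of "gs ! i" n]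
    by (auto simp: S12_def S1_def y_def)
  have reshape_X: "\<forall>ks\<in>tidx (replicate d' (n ^ \<kappa>)). reshape n \<kappa> X ks = c * (\<Prod>i<d'. y i (ks ! i))"
    using reshape_outer_concat[of n gs \<kappa> X c] assms(2) gs X d by (simp add: y_def)
  have "fnorm2 (replicate d' m) (multi_op d' (n ^ \<kappa>) A (reshape n \<kappa> X))
      = c\<^sup>2 * (\<Prod>i<d'. vnorm2 m (matvec (n ^ \<kappa>) (A i) (y i)))"
    using fnorm2_separable[of "replicate d' m" _ c "\<lambda>i. matvec (n ^ \<kappa>) (A i) (y i)"]
      multi_op_separable[OF reshape_X] by simp
  moreover have "fnorm2 (replicate d n) X = c\<^sup>2"
    using fnorm2_separable[of "replicate d n" X c "\<lambda>i. vs ! i"] X vs by (simp add: outer_def)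
  moreover have "\<forall>i<d'. 1 - \<epsilon> \<le> vnorm2 m (matvec (n ^ \<kappa>) (A i) (y i))
      \<and> vnorm2 m (matvec (n ^ \<kappa>) (A i) (y i)) \<le> 1 + \<epsilon>"
    using assms(6) y by (force simp: RIP_def)
  ultimately show ?thesis
    using prod_bounds_by_delta[OF _ \<open>0 < d'\<close> \<open>d' \<le> d\<close> assms(7,8)]
    by (simp add: mult_left_mono mult.commute[of _ "c\<^sup>2"])
qed

end
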